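(* Let $f$ be a non-imposing ABC voting rule that satisfies anonymity, neutrality, consistency, continuity, choice set convexity, and weak efficiency. Then for every candidate $x\in\mathcal C$ and every ballot size $r\in\{1,\dots,m\}$ the following holds: if there is a ballot $S\in\mathcal A$ with $|S|=r$ such that $f(S)\neq\mathcal W_k$ (where $f(S)$ is the outcome on the one-voter profile with ballot $S$), then $f(A^{x,r})=\{W\in\mathcal W_k:x\in W\}$ and $f(A^{-x,r})=\{W\in\mathcal W_k:x\notin W\}$.
   Context: Let $\mathcal C=\{c_1,\dots,c_m\}$ be a set of $m\ge 2$ candidates and $\mathbb N=\{1,2,\dots\}$ the set of potential voters. An approval ballot is a non-empty subset of $\mathcal C$; $\mathcal A$ is the set of all ballots. A profile is a map $A:N_A\to\mathcal A$ for a non-empty finite electorate $N_A\subseteq\mathbb N$; $\mathcal A^*$ is the set of profiles. For disjoint electorates $A+A'$ is the union profile, and $\lambda A$ consists of $\lambda$ copies of $A$ on disjoint voter sets. Fix $k\in\{1,\dots,m-1\}$; $\mathcal W_k$ is the set of $k$-element subsets of $\mathcal C$. An ABC voting rule is a map $f:\mathcal A^*\to2^{\mathcal W_k}\setminus\{\emptyset\}$. Anonymity: invariance under renaming voters. Neutrality: $f(\tau(A))=\{\tau(W):W\in f(A)\}$ for every permutation $\tau$ of $\mathcal C$ ($\tau(A)_i=\tau(A_i)$). Consistency: $f(A+A')=f(A)\cap f(A')$ for disjoint $A,A'$ with non-empty intersection of outcomes. Continuity: for all $A,A'$ there is $\lambda\in\mathbb N$ with $f(\lambda A+A')\subseteq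 f(A)$. Weak efficiency: if $W\in f(A)$ and $c\in W$ is approved by no voter of $A$, then $(W\cup\{c'\})\setminus\{c\}\in f(A)$ for all $c'\notin W$. Choice set convexity: $W,W'\in f(A)$ implies $W''\in f(A)$ for all $W''\in\mathcal W_k$ with $W\cap W'\subseteq W''\subseteq W\cup W'$. Non-imposing: for every $W\in\mathcal W_k$ there is a profile $A$ with $f(A)=\{W\}$. For $x\in\mathcal C$ and $r\in\{1,\dots,m\}$, $A^{x,r}$ is the profile in which every ballot $S\in\mathcal A$ with $|S|=r$ and $x\in S$ is reported by exactly one voter (and no other ballots appear), and $A^{-x,r}$ is the profile in which every ballot $S$ with $|S|=r$ and $x\notin S$ is reported by exactly one voter. *)

theory Defs
  imports Main
begin

text \<open>Candidates are the elements of a finite type 'a (m = CARD('a)). A profile is a finite partial map from voters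
to ballots (non-empty sets of candidates); its electorate is its domain.\<close>

type_synonym 'a profile = "nat \<Rightarrow> 'a set option"

definition is_ballot :: "'a set \<Rightarrow> bool" where
  "is_ballot S \<longleftrightarrow> S \<noteq> {}"

definition is_profile :: "'a profile \<Rightarrow> bool" where
  "is_profile A \<longleftrightarrow> finite (dom A) \<and> dom A \<noteq> {} \<and> 0 \<notin> dom A
     \<and> (\<forall>S\<in>ran A. is_ballot S)"

definition committees :: "nat \<Rightarrow> 'a set set" where
  "committees k = {W. card W = k}"

definition is_abc_rule :: "nat \<Rightarrow> ('a profile \<Rightarrow> 'a set set) \<Rightarrow> bool" where
  "is_abc_rule k f \<longleftrightarrow> (\<forall>A. is_profile A \<longrightarrow> f A \<noteq> {} \<and> f A \<subseteq> committees k)"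

definition anonymous :: "('a profile \<Rightarrow> 'a set set) \<Rightarrow> bool" where
  "anonymous f \<longleftrightarrow> (\<forall>A A' \<pi>. is_profile A \<and> is_profile A' \<and> bij_betw \<pi> (dom A') (dom A)
      \<and> (\<forall>i\<in>dom A'. A' i = A (\<pi> i)) \<longrightarrow> f A' = f A)"

definition neutral :: "('a profile \<Rightarrow> 'a set set) \<Rightarrow> bool" where
  "neutral f \<longleftrightarrow> (\<forall>A \<tau>. is_profile A \<and> bij \<tau> \<longrightarrow>
      f (\<lambda>i. map_option (image \<tau>) (A i)) = image \<tau> ` f A)"

definition consistent :: "('a profile \<Rightarrow> 'a set set) \<Rightarrow> bool" where
  "consistent f \<longleftrightarrow> (\<forall>A A'. is_profile A \<and> is_profile A' \<and> dom A \<inter> dom A' = {}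
      \<and> f A \<inter> f A' \<noteq> {} \<longrightarrow> f (A ++ A') = f A \<inter> f A')"

text \<open>B consists of lam copies of A on pairwise disjoint voter sets.\<close>
definition copies :: "nat \<Rightarrow> 'a profile \<Rightarrow> 'a profile \<Rightarrow> bool" where
  "copies lam A B \<longleftrightarrow> (\<exists>N \<pi>. (\<forall>j<lam. bij_betw (\<pi> j) (N j) (dom A))
      \<and> (\<forall>j<lam. \<forall>j'<lam. j \<noteq> j' \<longrightarrow> N j \<inter> N j' = {})
      \<and> dom B = (\<Union>j<lam. N j)
      \<and> (\<forall>j<lam. \<forall>i\<in>N j. B i = A (\<pi> j i)))"

definition continuous_rule :: "('a profile \<Rightarrow> 'a set set) \<Rightarrow> bool" where
  "continuous_rule f \<longleftrightarrow> (\<forall>A A'. is_profile A \<and> is_profile A' \<longrightarrow>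
      (\<exists>lam\<ge>1. \<forall>B. is_profile B \<and> copies lam A B \<and> dom B \<inter> dom A' = {}
          \<longrightarrow> f (B ++ A') \<subseteq> f A))"

definition weakly_efficient :: "('a profile \<Rightarrow> 'a set set) \<Rightarrow> bool" where
  "weakly_efficient f \<longleftrightarrow> (\<forall>A W c. is_profile A \<and> W \<in> f A \<and> c \<in> W
      \<and> (\<forall>S\<in>ran A. c \<notin> S) \<longrightarrow> (\<forall>c'. c' \<notin> W \<longrightarrow> insert c' (W - {c}) \<in> f A))"

definition choice_set_convex :: "nat \<Rightarrow> ('a profile \<Rightarrow> 'a set set) \<Rightarrow> bool" where
  "choice_set_convex k f \<longleftrightarrow> (\<forall>A W W' W''. is_profile A \<and> W \<in> f A \<and> W' \<in> f A
      \<and> W'' \<in> committees k \<and> W \<inter> W' \<subseteq> W'' \<and> W'' \<subseteq> W \<union> W' \<longrightarrow> W'' \<in> f A)"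

definition non_imposing :: "nat \<Rightarrow> ('a profile \<Rightarrow> 'a set set) \<Rightarrow> bool" where
  "non_imposing k f \<longleftrightarrow> (\<forall>W\<in>committees k. \<exists>A. is_profile A \<and> f A = {W})"

definition single :: "'a set \<Rightarrow> 'a profile" where
  "single S = [1 \<mapsto> S]"

definition each_once :: "'a set set \<Rightarrow> 'a profile \<Rightarrow> bool" where
  "each_once X A \<longleftrightarrow> ran A \<subseteq> X \<and> (\<forall>S\<in>X. card {i\<in>dom A. A i = Some S} = 1)"

definition ballots_with :: "'a \<Rightarrow> nat \<Rightarrow> 'a set set" where
  "ballots_with x r = {S. is_ballot S \<and> card S = r \<and> x \<in> S}"

definition ballots_without :: "'a \<Rightarrow> nat \<Rightarrow> 'a set set" where
  "ballots_without x r = {S. is_ballot S \<and> card S = r \<and> x \<notin> S}"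

end

theory Submission
  imports Defs "HOL-Combinatorics.Transposition"
begin

text \<open>By anonymity, f takes one value on all profiles reporting each ballot of a set X
  exactly once; call it the outcome of X. By consistency the outcome of a disjoint union is the
  intersection of the outcomes whenever these meet, and by neutrality outcomes are equivariant
  under permutations of the candidates. Let P and N be the outcomes of the r-ballots containing,
  respectively avoiding, x. Both are invariant under transpositions fixing x, so they only see
  whether a committee contains x. If P and N met, their intersection would be the outcome of all
  r-ballots, which by symmetry is the set of all committees; then an induction on |Y| + |Z| shows
  that every family of r-ballots containing Y and avoiding Z has all committees as outcome (weak
  efficiency provides a committee common to both halves when such a family is split), and the
  family {S} contradicts the hypothesis. Hence P and N are disjoint, weak efficiency puts a
  committee without x into N, and the two outcomes are forced.\<close>

section \<open>Profiles reporting each ballot of a set once\<close>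

lemma each_once_iff: "each_once X A \<longleftrightarrow> ran A \<subseteq> X \<and> (\<forall>S\<in>X. card {i. A i = Some S} = 1)"
proof -
  have "{i \<in> dom A. A i = Some S} = {i. A i = Some S}" for S by auto
  then show ?thesis unfolding each_once_def by simp
qed

lemma ran_each_once:
  assumes "each_once X A" shows "ran A = X"
proof
  show "ran A \<subseteq> X" using assms unfolding each_once_iff by simp
  show "X \<subseteq> ran A"
  proof
    fix S assume "S \<in> X"
    then have "card {i. A i = Some S} = 1" using assms unfolding each_once_iff by simp
    then have "{i. A i = Some S} \<noteq> {}" by (metis card.empty zero_neq_one)
    then show "S \<in> ran A" by (auto intro: ranI)
  qed
qed

text \<open>Voters n + 1, ..., n + card X report the ballots of X along a fixed enumeration;
  the offset n allows placing two such profiles on disjoint electorates.\<close>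
definition set_profile :: "nat \<Rightarrow> 'a set set \<Rightarrow> 'a profile" where
  "set_profile n X i = (if n < i \<and> i \<le> n + card X
     then Some ((SOME e. bij_betw e {0..<card X} X) (i - n - 1)) else None)"

lemma
  assumes "finite X"
  shows dom_set_profile: "dom (set_profile n X) = {n<..n + card X}"
    and each_once_set_profile: "each_once X (set_profile n X)"
proof -
  define e where "e = (SOME e. bij_betw e {0..<card X} X)"
  have e: "bij_betw e {0..<card X} X"
    unfolding e_def using ex_bij_betw_nat_finite[OF assms] by (rule someI_ex)
  have P: "set_profile n X i = (if n < i \<and> i \<le> n + card X then Some (e (i - n - 1)) else None)" for i
    by (simp add: set_profile_def e_def)
  show "dom (set_profile n X) = {n<..n + card X}"
    unfolding dom_def P by auto
  have voters: "{i. set_profile n X i = Some (e j)} = {n + 1 + j}" if "j < card X" for j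
  proof -
    have "i = n + 1 + j" if "n < i" "i \<le> n + card X" "e (i - n - 1) = e j" for i
    proof -
      have "i - n - 1 = j"
        using e \<open>j < card X\<close> that inj_onD[of e "{0..<card X}"] unfolding bij_betw_def by auto
      then show ?thesis using that(1) by simp
    qed
    then show ?thesis using that unfolding P by (auto split: if_splits)
  qed
  show "each_once X (set_profile n X)"
    unfolding each_once_iff
  proof (intro conjI ballI)
    show "ran (set_profile n X) \<subseteq> X"
      using e unfolding P ran_def bij_betw_def by (auto split: if_splits)
    fix S assume "S \<in> X"
    then obtain j where "j < card X" "S = e j"
      using e unfolding bij_betw_def by (metis atLeastLessThan_iff imageE)
    then show "card {i. set_profile n X i = Some S} = 1"
      using voters by simp
  qed
qed

definition ballot_family :: "'a set set \<Rightarrow> bool" where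
  "ballot_family X \<longleftrightarrow> finite X \<and> X \<noteq> {} \<and> {} \<notin> X"

lemma is_profile_set_profile:
  assumes "ballot_family X" shows "is_profile (set_profile n X)"
proof -
  have "finite X" "card X > 0" "{} \<notin> X"
    using assms unfolding ballot_family_def by (simp_all add: card_gt_0_iff)
  then show ?thesis
    unfolding is_profile_def is_ballot_def dom_set_profile[OF \<open>finite X\<close>]
      ran_each_once[OF each_once_set_profile[OF \<open>finite X\<close>]] by auto
qed

lemma ballot_family_each_once:
  assumes "is_profile A" "each_once X A" shows "ballot_family X"
proof -
  have "ran A \<noteq> {}" using assms(1) unfolding is_profile_def ran_def dom_def by auto
  then show ?thesis
    using assms finite_ran[of A] unfolding ballot_family_def is_profile_def is_ballot_def
    ran_each_once[OF assms(2)] by blast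
qed

lemma bij_betw_each_once:
  assumes "each_once X A"
  shows "bij_betw (\<lambda>i. the (A i)) (dom A) X"
proof -
  have "inj_on (\<lambda>i. the (A i)) (dom A)"
  proof (rule inj_onI)
    fix i j assume "i \<in> dom A" "j \<in> dom A" "the (A i) = the (A j)"
    then obtain S where S: "A i = Some S" "A j = Some S" by auto
    moreover have "card {l. A l = Some S} = 1"
      using assms S(1) unfolding each_once_iff by (auto intro: ranI)
    ultimately show "i = j" by (metis (mono_tags, lifting) card_1_singletonE mem_Collect_eq singletonD)
  qed
  moreover have "(\<lambda>i. the (A i)) ` dom A = X"
    using ran_each_once[OF assms] unfolding ran_def dom_def by force
  ultimately show ?thesis unfolding bij_betw_def by simp
qed

lemma is_profile_single: "S \<noteq> {} \<Longrightarrow> is_profile (single S)"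
  unfolding is_profile_def single_def is_ballot_def by simp

lemma each_once_single: "each_once {S} (single S)"
  unfolding each_once_iff single_def by simp

lemma anonymous_each_once:
  assumes "anonymous f" "is_profile A" "is_profile B" "each_once X A" "each_once X B"
  shows "f B = f A"
proof -
  define \<pi> where "\<pi> i = inv_into (dom A) (\<lambda>i. the (A i)) (the (B i))" for i
  have bA: "bij_betw (\<lambda>i. the (A i)) (dom A) X" and bB: "bij_betw (\<lambda>i. the (B i)) (dom B) X"
    using bij_betw_each_once assms(4,5) by blast+
  have "bij_betw \<pi> (dom B) (dom A)"
    unfolding \<pi>_def using bij_betw_trans[OF bB bij_betw_inv_into[OF bA]] by (simp add: comp_def)
  moreover have "B i = A (\<pi> i)" if "i \<in> dom B" for i
  proof -
    have "the (B i) \<in> X" using bB that unfolding bij_betw_def by auto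
    then have "\<pi> i \<in> dom A" "the (A (\<pi> i)) = the (B i)"
      unfolding \<pi>_def using bA by (simp_all add: bij_betw_def inv_into_into f_inv_into_f[where f = "\<lambda>i. the (A i)"])
    then show ?thesis using that by (metis domD option.sel)
  qed
  ultimately show ?thesis using assms(1-3) unfolding anonymous_def by blast
qed

lemma is_profile_map_add:
  assumes "is_profile A" "is_profile B" "dom A \<inter> dom B = {}" shows "is_profile (A ++ B)"
  using assms unfolding is_profile_def dom_map_add ran_map_add[OF assms(3)] by blast

lemma each_once_map_add:
  assumes "each_once X A" "each_once X' B" "dom A \<inter> dom B = {}" "X \<inter> X' = {}"
  shows "each_once (X \<union> X') (A ++ B)"
  unfolding each_once_iff
proof (intro conjI ballI)
  have ran: "ran A = X" "ran B = X'" using assms(1,2) by (simp_all add: ran_each_once)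
  show "ran (A ++ B) \<subseteq> X \<union> X'"
    using ran_map_add[OF assms(3)] ran by simp
  fix S assume "S \<in> X \<union> X'"
  then consider "S \<in> X" "S \<notin> ran B" | "S \<in> X'" "S \<notin> ran A"
    using assms(4) ran by blast
  then show "card {i. (A ++ B) i = Some S} = 1"
  proof cases
    case 1
    have "(A ++ B) i = Some S \<longleftrightarrow> A i = Some S" for i
      using 1 assms(3) ranI[of B i S] domI[of A i] domI[of B i] unfolding map_add_Some_iff by blast
    then show ?thesis using assms(1) 1 unfolding each_once_iff by simp
  next
    case 2
    have "(A ++ B) i = Some S \<longleftrightarrow> B i = Some S" for i
      using 2 ranI[of A i S] unfolding map_add_Some_iff by blast
    then show ?thesis using assms(2) 2 unfolding each_once_iff by simp
  qed
qed

lemma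
  assumes "inj \<tau>"
  shows is_profile_map_image: "is_profile A \<Longrightarrow> is_profile (\<lambda>i. map_option (image \<tau>) (A i))"
    and each_once_map_image: "each_once X A \<Longrightarrow> each_once (image \<tau> ` X) (\<lambda>i. map_option (image \<tau>) (A i))"
proof -
  have dom: "dom (\<lambda>i. map_option (image \<tau>) (A i)) = dom A" by auto
  have ran: "ran (\<lambda>i. map_option (image \<tau>) (A i)) = image \<tau> ` ran A" unfolding ran_def by force
  show "is_profile A \<Longrightarrow> is_profile (\<lambda>i. map_option (image \<tau>) (A i))"
    unfolding is_profile_def is_ballot_def dom ran by auto
  assume A: "each_once X A"
  show "each_once (image \<tau> ` X) (\<lambda>i. map_option (image \<tau>) (A i))"
    unfolding each_once_iff
  proof (intro conjI ballI)
    show "ran (\<lambda>i. map_option (image \<tau>) (A i)) \<subseteq> image \<tau> ` X"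
      unfolding ran ran_each_once[OF A] ..
    fix T assume "T \<in> image \<tau> ` X"
    then obtain S where S: "S \<in> X" "T = \<tau> ` S" by auto
    then have "map_option (image \<tau>) (A i) = Some T \<longleftrightarrow> A i = Some S" for i
      using inj_image_eq_iff[OF assms] by (cases "A i") auto
    then show "card {i. map_option (image \<tau>) (A i) = Some T} = 1"
      using A S unfolding each_once_iff by simp
  qed
qed

section \<open>Outcomes of ballot sets\<close>

locale symmetric_consistent_rule =
  fixes f :: "('a::finite) profile \<Rightarrow> 'a set set" and k :: nat
  assumes abc_rule: "is_abc_rule k f" and anonymous: "anonymous f" and neutral: "neutral f"
    and consistent: "consistent f" and weakly_efficient: "weakly_efficient f"
    and k_less_card: "k < card (UNIV :: 'a set)"
begin

definition outcome :: "'a set set \<Rightarrow> 'a set set" where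
  "outcome X = f (set_profile 0 X)"

lemma f_eq_outcome:
  assumes "is_profile A" "each_once X A" shows "f A = outcome X"
proof -
  have X: "ballot_family X" by (rule ballot_family_each_once[OF assms])
  then have "finite X" unfolding ballot_family_def by simp
  with X show ?thesis
    unfolding outcome_def using anonymous_each_once[OF anonymous _ assms(1) _ assms(2)]
    by (simp add: is_profile_set_profile each_once_set_profile)
qed

lemma
  assumes "ballot_family X"
  shows outcome_nonempty: "outcome X \<noteq> {}"
    and outcome_subset_committees: "outcome X \<subseteq> committees k"
  using abc_rule is_profile_set_profile[OF assms] unfolding outcome_def is_abc_rule_def by auto

lemma outcome_Un:
  assumes "ballot_family X" "ballot_family X'" "X \<inter> X' = {}" "outcome X \<inter> outcome X' \<noteq> {}"
  shows "outcome (X \<union> X') = outcome X \<inter> outcome X'"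
proof -
  define A where "A = set_profile 0 X"
  define B where "B = set_profile (card X) X'"
  have fin: "finite X" "finite X'" using assms(1,2) unfolding ballot_family_def by auto
  have A: "is_profile A" "each_once X A" and B: "is_profile B" "each_once X' B"
    unfolding A_def B_def using assms(1,2) fin
    by (simp_all add: is_profile_set_profile each_once_set_profile)
  have disj: "dom A \<inter> dom B = {}" unfolding A_def B_def using fin by (auto simp: dom_set_profile)
  have "f A \<inter> f B \<noteq> {}" using assms(4) f_eq_outcome[OF A] f_eq_outcome[OF B] by simp
  then have "f (A ++ B) = f A \<inter> f B"
    using consistent A(1) B(1) disj unfolding consistent_def by blast
  moreover have "f (A ++ B) = outcome (X \<union> X')"
    using f_eq_outcome is_profile_map_add[OF A(1) B(1) disj] each_once_map_add[OF A(2) B(2) disj assms(3)]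
    by blast
  ultimately show ?thesis using f_eq_outcome[OF A] f_eq_outcome[OF B] by simp
qed

lemma outcome_Un_indifferent:
  assumes "ballot_family X" "ballot_family X'" "X \<inter> X' = {}" "outcome X' = committees k"
  shows "outcome (X \<union> X') = outcome X"
  using outcome_Un[OF assms(1-3)] outcome_nonempty[OF assms(1)] outcome_subset_committees[OF assms(1)]
    assms(4) by (simp add: Int_absorb2)

lemma outcome_image:
  assumes "ballot_family X" "bij \<tau>"
  shows "outcome (image \<tau> ` X) = image \<tau> ` outcome X"
proof -
  define A where "A = set_profile 0 X"
  have A: "is_profile A" "each_once X A"
    unfolding A_def using assms(1) by (simp_all add: is_profile_set_profile each_once_set_profile ballot_family_def)
  have "f (\<lambda>i. map_option (image \<tau>) (A i)) = image \<tau> ` f A"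
    using neutral A(1) assms(2) unfolding neutral_def by blast
  then show ?thesis
    using f_eq_outcome[OF A] f_eq_outcome is_profile_map_image[OF bij_is_inj[OF assms(2)] A(1)]
      each_once_map_image[OF bij_is_inj[OF assms(2)] A(2)] by simp
qed

lemma outcome_replace_unapproved:
  assumes "ballot_family X" "W \<in> outcome X" "c \<in> W" "\<forall>S\<in>X. c \<notin> S" "c' \<notin> W"
  shows "insert c' (W - {c}) \<in> outcome X"
proof -
  have "\<forall>S\<in>ran (set_profile 0 X). c \<notin> S"
    using assms(4) ran_each_once[OF each_once_set_profile[of X 0]] by simp
  then show ?thesis
    using weakly_efficient is_profile_set_profile[OF assms(1)] assms(2,3,5)
    unfolding weakly_efficient_def outcome_def by blast
qed

end

section \<open>Transposition-closed families of committees\<close>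

lemma transpose_image_swap_member:
  assumes "a \<in> W" "b \<notin> W" shows "transpose a b ` W = insert b (W - {a})"
  using assms by (auto simp: in_transpose_image_iff transpose_def)

lemma card_transpose_image: "card (transpose a b ` W) = card W"
  by (simp add: card_image)

lemma transpose_image_Int:
  "(a \<in> H \<longleftrightarrow> b \<in> H) \<Longrightarrow> transpose a b ` W \<inter> H = transpose a b ` (W \<inter> H)"
  by (simp add: image_Int inj_transpose)

definition swap_closed :: "'a set \<Rightarrow> 'a set set \<Rightarrow> bool" where
  "swap_closed H K \<longleftrightarrow> (\<forall>a b W. (a \<in> H \<longleftrightarrow> b \<in> H) \<longrightarrow> W \<in> K \<longrightarrow> transpose a b ` W \<in> K)"

lemma swap_closed_orbit:
  fixes K :: "('a::finite) set set"
  assumes closed: "swap_closed H K"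
  shows "W \<in> K \<Longrightarrow> card W' = card W \<Longrightarrow> card (W' \<inter> H) = card (W \<inter> H) \<Longrightarrow> W' \<in> K"
proof (induction "card (W - W')" arbitrary: W rule: less_induct)
  case less
  show ?case
  proof (cases "W \<subseteq> W'")
    case True
    then show ?thesis using less.prems card_subset_eq[of W' W] by simp
  next
    case False
    then obtain a where a: "a \<in> W" "a \<notin> W'" by auto
    have "\<exists>b. b \<in> W' \<and> b \<notin> W \<and> (a \<in> H \<longleftrightarrow> b \<in> H)"
    proof (rule ccontr)
      assume none: "\<not> ?thesis"
      show False
      proof (cases "a \<in> H")
        case True
        then have "W' \<inter> H \<subseteq> W \<inter> H - {a}" using none a by auto
        then have "card (W' \<inter> H) \<le> card (W \<inter> H - {a})" by (simp add: card_mono)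
        also have "\<dots> < card (W \<inter> H)" using True a by (intro card_Diff1_less) auto
        finally show False using less.prems(3) by simp
      next
        case False
        have "card (W' - H) = card (W - H)"
          using less.prems(2,3) by (simp add: card_Diff_subset_Int Int_commute)
        have "W' - H \<subseteq> W - H - {a}" using False none a by auto
        then have "card (W' - H) \<le> card (W - H - {a})" by (simp add: card_mono)
        also have "\<dots> < card (W - H)" using False a by (intro card_Diff1_less) auto
        finally show False using \<open>card (W' - H) = card (W - H)\<close> by simp
      qed
    qed
    then obtain b where b: "b \<in> W'" "b \<notin> W" "a \<in> H \<longleftrightarrow> b \<in> H" by blast
    define V where "V = transpose a b ` W"
    have "V \<in> K" using closed less.prems(1) b(3) unfolding swap_closed_def V_def by blast
    moreover have "card V = card W" "card (V \<inter> H) = card (W \<inter> H)"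
      unfolding V_def using transpose_image_Int[OF b(3)] card_transpose_image by metis+
    moreover have "V - W' = W - W' - {a}"
      unfolding V_def transpose_image_swap_member[OF a(1) b(2)] using a b by auto
    then have "card (V - W') < card (W - W')" using a by (simp only:) (intro card_Diff1_less; simp)
    ultimately show ?thesis using less.hyps less.prems by simp
  qed
qed

text \<open>The committees of size k with as few members in H as possible.\<close>
definition min_meet_committees :: "nat \<Rightarrow> 'a set \<Rightarrow> 'a set set" where
  "min_meet_committees k H = {W. card W = k \<and> (W \<subseteq> - H \<or> - H \<subseteq> W)}"

lemma card_Int_min_meet_committees:
  fixes W :: "('a::finite) set"
  assumes "W \<in> min_meet_committees k H" shows "card (W \<inter> H) = k - card (- H)"
proof (cases "W \<subseteq> - H")
  case True
  then show ?thesis using assms card_mono[of "- H" W]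
    unfolding min_meet_committees_def by (simp add: disjoint_eq_subset_Compl)
next
  case False
  then have "- H \<subseteq> W" "card W = k" using assms unfolding min_meet_committees_def by auto
  then show ?thesis using card_Diff_subset_Int[of W H] card_mono[of W "W \<inter> H"]
    by (simp add: Diff_eq Int_absorb1 Int_commute)
qed

lemma min_meet_committees_nonempty:
  fixes H :: "('a::finite) set"
  assumes "k \<le> card (UNIV :: 'a set)" shows "min_meet_committees k H \<noteq> {}"
proof (cases "k \<le> card (- H)")
  case True
  then obtain T where "T \<subseteq> - H" "card T = k" by (meson obtain_subset_with_card_n)
  then show ?thesis unfolding min_meet_committees_def by auto
next
  case False
  have "card H + card (- H) = card (UNIV :: 'a set)"
    using card_Un_disjoint[of H "- H"] by (simp add: Compl_partition)
  then obtain T where T: "T \<subseteq> H" "card T = k - card (- H)"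
    using assms by (metis add_diff_cancel_right' diff_le_mono obtain_subset_with_card_n)
  then have "card (- H \<union> T) = k" using False by (subst card_Un_disjoint) auto
  then show ?thesis unfolding min_meet_committees_def by auto
qed

text \<open>A committee of K meeting H least is extremal: otherwise transpose one of its members in H
  onto an unapproved z \<in> Z and then replace z by an outsider of H.\<close>
lemma min_meet_committees_subset:
  fixes K :: "('a::finite) set set"
  assumes "K \<noteq> {}" "K \<subseteq> committees k" and closed: "swap_closed H K"
    and "Z \<subseteq> H" "Z \<noteq> {}"
    and replace: "\<And>W c c'. W \<in> K \<Longrightarrow> c \<in> Z \<Longrightarrow> c \<in> W \<Longrightarrow> c' \<notin> W \<Longrightarrow> insert c' (W - {c}) \<in> K"
  shows "min_meet_committees k H \<subseteq> K"
proof
  obtain W0 where W0: "W0 \<in> K" and least: "\<And>W. W \<in> K \<Longrightarrow> card (W0 \<inter> H) \<le> card (W \<inter> H)"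
    using assms(1) ex_has_least_nat[of "\<lambda>W. W \<in> K" _ "\<lambda>W. card (W \<inter> H)"] by blast
  have "W0 \<subseteq> - H \<or> - H \<subseteq> W0"
  proof (rule ccontr)
    assume "\<not> (W0 \<subseteq> - H \<or> - H \<subseteq> W0)"
    then obtain h c where hc: "h \<in> W0" "h \<in> H" "c \<notin> H" "c \<notin> W0" by auto
    obtain z where z: "z \<in> Z" "z \<in> H" using assms(4,5) by auto
    define V where "V = transpose h z ` W0"
    have "V \<in> K" using closed W0 hc z unfolding swap_closed_def V_def by blast
    moreover have "z \<in> V" "c \<notin> V"
      unfolding V_def using hc z by (auto simp: in_transpose_image_iff transpose_def)
    ultimately have "insert c (V - {z}) \<in> K" using replace z by blast
    moreover have "insert c (V - {z}) \<inter> H = V \<inter> H - {z}" using hc by auto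
    then have "card (insert c (V - {z}) \<inter> H) < card (V \<inter> H)"
      using \<open>z \<in> V\<close> z by (simp only:) (intro card_Diff1_less; simp)
    moreover have "card (V \<inter> H) = card (W0 \<inter> H)"
      unfolding V_def using transpose_image_Int[of h H z W0] hc z card_transpose_image by metis
    ultimately show False using least by fastforce
  qed
  then have W0_min: "W0 \<in> min_meet_committees k H"
    using W0 assms(2) unfolding min_meet_committees_def committees_def by auto
  fix W assume "W \<in> min_meet_committees k H"
  then show "W \<in> K"
    using swap_closed_orbit[OF closed W0] card_Int_min_meet_committees[OF W0_min]
      card_Int_min_meet_committees W0_min unfolding min_meet_committees_def by auto
qed

section \<open>Ballots with prescribed members\<close>

definition ballots :: "nat \<Rightarrow> 'a set \<Rightarrow> 'a set \<Rightarrow> 'a set set" where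
  "ballots r Y Z = {S. card S = r \<and> Y \<subseteq> S \<and> S \<inter> Z = {}}"

lemma image_ballots:
  assumes "bij \<tau>" shows "image \<tau> ` ballots r Y Z = ballots r (\<tau> ` Y) (\<tau> ` Z)"
proof -
  have inj: "inj \<tau>" using assms by (rule bij_is_inj)
  have mem: "S \<in> ballots r Y Z \<longleftrightarrow> \<tau> ` S \<in> ballots r (\<tau> ` Y) (\<tau> ` Z)" for S
    unfolding ballots_def using inj
    by (auto simp: card_image inj_on_subset image_Int[symmetric] inj_image_subset_iff)
  have "T \<in> image \<tau> ` ballots r Y Z" if "T \<in> ballots r (\<tau> ` Y) (\<tau> ` Z)" for T
  proof -
    have "\<tau> ` (inv \<tau> ` T) = T" using assms by (simp add: image_comp bij_is_surj surj_f_inv_f)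
    then show ?thesis using mem that by (metis image_eqI)
  qed
  then show ?thesis using mem by auto
qed

lemma ballot_family_ballots:
  fixes Y :: "('a::finite) set"
  shows "1 \<le> r \<Longrightarrow> ballots r Y Z \<noteq> {} \<Longrightarrow> ballot_family (ballots r Y Z)"
  unfolding ballot_family_def ballots_def by auto

lemma ballots_with_eq: "1 \<le> r \<Longrightarrow> ballots_with x r = ballots r {x} {}"
  unfolding ballots_with_def ballots_def is_ballot_def by auto

lemma ballots_without_eq: "1 \<le> r \<Longrightarrow> ballots_without x r = ballots r {} {x}"
  unfolding ballots_without_def ballots_def is_ballot_def by auto

lemma ballots_singleton_nonempty:
  fixes x :: "'a::finite"
  assumes "1 \<le> r" "r < card (UNIV :: 'a set)"
  shows "ballots r {x} {} \<noteq> {}" "ballots r {} {x} \<noteq> {}"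
proof -
  have "card (- {x}) = card (UNIV :: 'a set) - 1"
    by (simp add: Compl_eq_Diff_UNIV card_Diff_singleton)
  then have "r - 1 \<le> card (- {x})" "r \<le> card (- {x})" using assms(2) by linarith+
  then obtain T T' where T: "T \<subseteq> - {x}" "card T = r - 1" and T': "T' \<subseteq> - {x}" "card T' = r"
    by (meson obtain_subset_with_card_n)
  then have "insert x T \<in> ballots r {x} {}" "T' \<in> ballots r {} {x}"
    using assms(1) unfolding ballots_def by (auto simp: card_insert_disjoint subset_Compl_singleton)
  then show "ballots r {x} {} \<noteq> {}" "ballots r {} {x} \<noteq> {}" by auto
qed

lemma image_committees:
  fixes \<tau> :: "'a \<Rightarrow> 'a"
  assumes "bij \<tau>" shows "image \<tau> ` committees k = committees k"
proof -
  have card: "card (\<sigma> ` W) = card W" if "bij \<sigma>" for \<sigma> :: "'a \<Rightarrow> 'a" and W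
    using that by (metis bij_is_inj card_image inj_on_subset subset_UNIV)
  have "W \<in> image \<tau> ` committees k" if "W \<in> committees k" for W
  proof
    show "W = \<tau> ` (inv \<tau> ` W)" using assms by (simp add: image_comp bij_is_surj surj_f_inv_f)
    show "inv \<tau> ` W \<in> committees k" using that card[OF bij_imp_bij_inv[OF assms]]
      unfolding committees_def by simp
  qed
  then show ?thesis using card[OF assms] unfolding committees_def by auto
qed

section \<open>Indifference propagates to all ballot families\<close>

locale symmetric_consistent_rule_ballot_size = symmetric_consistent_rule f k
  for f :: "('a::finite) profile \<Rightarrow> 'a set set" and k :: nat +
  fixes r :: nat
  assumes r_pos: "1 \<le> r"
begin

lemma outcome_ballots_transpose:
  assumes "ballots r Y Z \<noteq> {}" "a \<in> Y \<longleftrightarrow> b \<in> Y" "a \<in> Z \<longleftrightarrow> b \<in> Z"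
    and "W \<in> outcome (ballots r Y Z)"
  shows "transpose a b ` W \<in> outcome (ballots r Y Z)"
proof -
  have "image (transpose a b) ` ballots r Y Z = ballots r Y Z"
    unfolding image_ballots[OF bij_transpose] transpose_image_eq[OF assms(2)]
      transpose_image_eq[OF assms(3)] ..
  then have "outcome (ballots r Y Z) = image (transpose a b) ` outcome (ballots r Y Z)"
    using outcome_image[OF ballot_family_ballots[OF r_pos assms(1)] bij_transpose] by metis
  then show ?thesis using assms(4) by blast
qed

definition indifferent_at :: "nat \<Rightarrow> bool" where
  "indifferent_at n \<longleftrightarrow> (\<forall>Y Z. Y \<inter> Z = {} \<longrightarrow> card Y + card Z = n \<longrightarrow> ballots r Y Z \<noteq> {}
     \<longrightarrow> outcome (ballots r Y Z) = committees k)"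

lemma indifferent_atD:
  "indifferent_at n \<Longrightarrow> Y \<inter> Z = {} \<Longrightarrow> card Y + card Z = n \<Longrightarrow> ballots r Y Z \<noteq> {}
    \<Longrightarrow> outcome (ballots r Y Z) = committees k"
  unfolding indifferent_at_def by blast

text \<open>With Y = insert a Y0 and Z = insert b Z0, the disjoint unions
  ballots r Y Z \<union> ballots r (insert b Y0) Z0 and ballots r (insert b Y0) (insert a Z0) \<union> ballots r Y Z0
  coincide; the second parts are indifferent, and the first parts are mapped onto each other
  by transposing a and b.\<close>
lemma outcome_ballots_transpose_across:
  assumes IH: "indifferent_at n"
    and disj: "Y \<inter> Z = {}" and card: "card Y + card Z = Suc n" and ne: "ballots r Y Z \<noteq> {}"
    and a: "a \<in> Y" and b: "b \<in> Z" and W: "W \<in> outcome (ballots r Y Z)"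
  shows "transpose a b ` W \<in> outcome (ballots r Y Z)"
proof -
  define Y0 where "Y0 = Y - {a}"
  define Z0 where "Z0 = Z - {b}"
  define P where "P = ballots r Y Z"
  define Q where "Q = ballots r (insert b Y0) (insert a Z0)"
  define R1 where "R1 = ballots r (insert b Y0) Z0"
  define R2 where "R2 = ballots r Y Z0"
  have Y: "Y = insert a Y0" "a \<notin> Y0" "b \<notin> Y0" and Z: "Z = insert b Z0" "b \<notin> Z0" "a \<notin> Z0"
    unfolding Y0_def Z0_def using a b disj by auto
  have "b \<notin> Y" "a \<notin> Z" using a b disj by auto
  then have "transpose a b ` Y = insert b Y0" "transpose a b ` Z = insert a Z0"
    using transpose_image_swap_member[OF a, of b] transpose_image_swap_member[OF b, of a]
    unfolding Y0_def Z0_def by (simp_all add: transpose_commute)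
  then have QP: "Q = image (transpose a b) ` P"
    unfolding Q_def P_def image_ballots[OF bij_transpose] by simp
  have cover: "P \<union> R1 = Q \<union> R2"
  proof (rule set_eqI)
    fix S show "S \<in> P \<union> R1 \<longleftrightarrow> S \<in> Q \<union> R2"
      unfolding P_def Q_def R1_def R2_def ballots_def Y Z using Y Z
      by (cases "a \<in> S"; cases "b \<in> S") auto
  qed
  have disjoint: "P \<inter> R1 = {}" "Q \<inter> R2 = {}"
    unfolding P_def Q_def R1_def R2_def ballots_def Y Z by auto
  have "Q \<noteq> {}" using ne QP unfolding P_def by simp
  moreover have "Q \<subseteq> R1" "P \<subseteq> R2" unfolding P_def Q_def R1_def R2_def ballots_def Y Z by auto
  ultimately have ne': "R1 \<noteq> {}" "R2 \<noteq> {}" using ne unfolding P_def by auto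
  have "insert b Y0 \<inter> Z0 = {}" "card (insert b Y0) + card Z0 = n"
    and "Y \<inter> Z0 = {}" "card Y + card Z0 = n"
    using card disj Y Z by (auto simp: card_insert_disjoint)
  then have indiff: "outcome R1 = committees k" "outcome R2 = committees k"
    unfolding R1_def R2_def using indifferent_atD[OF IH] ne'[unfolded R1_def R2_def] by simp_all
  have family: "ballot_family P" "ballot_family Q" "ballot_family R1" "ballot_family R2"
    using ballot_family_ballots[OF r_pos] ne \<open>Q \<noteq> {}\<close> ne' unfolding P_def Q_def R1_def R2_def by auto
  have "outcome P = outcome (P \<union> R1)"
    using outcome_Un_indifferent[OF family(1,3) disjoint(1) indiff(1)] ..
  also have "\<dots> = outcome Q"
    unfolding cover using outcome_Un_indifferent[OF family(2,4) disjoint(2) indiff(2)] .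
  also have "\<dots> = image (transpose a b) ` outcome P"
    using QP outcome_image[OF ballot_family_ballots[OF r_pos ne] bij_transpose] P_def by simp
  finally show ?thesis using W P_def by auto
qed

lemma swap_closed_outcome_ballots:
  assumes IH: "indifferent_at n"
    and disj: "Y \<inter> Z = {}" and card: "card Y + card Z = Suc n" and ne: "ballots r Y Z \<noteq> {}"
  shows "swap_closed (Y \<union> Z) (outcome (ballots r Y Z))"
  unfolding swap_closed_def
proof (intro allI impI)
  fix a b W assume side: "a \<in> Y \<union> Z \<longleftrightarrow> b \<in> Y \<union> Z" and W: "W \<in> outcome (ballots r Y Z)"
  consider "a \<in> Y" "b \<in> Z" | "b \<in> Y" "a \<in> Z" | "a \<in> Y \<longleftrightarrow> b \<in> Y" "a \<in> Z \<longleftrightarrow> b \<in> Z"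
    using side disj by blast
  then show "transpose a b ` W \<in> outcome (ballots r Y Z)"
  proof cases
    case 1
    then show ?thesis by (rule outcome_ballots_transpose_across[OF IH disj card ne _ _ W])
  next
    case 2
    then show ?thesis
      using outcome_ballots_transpose_across[OF IH disj card ne 2 W] by (simp add: transpose_commute)
  next
    case 3
    then show ?thesis using outcome_ballots_transpose[OF ne _ _ W] by blast
  qed
qed

lemma min_meet_committees_subset_outcome:
  assumes "Z \<noteq> {}" "ballots r Y Z \<noteq> {}" "swap_closed (Y \<union> Z) (outcome (ballots r Y Z))"
  shows "min_meet_committees k (Y \<union> Z) \<subseteq> outcome (ballots r Y Z)"
proof (rule min_meet_committees_subset[OF _ _ assms(3) _ assms(1)])
  have family: "ballot_family (ballots r Y Z)" using ballot_family_ballots[OF r_pos assms(2)] .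
  show "outcome (ballots r Y Z) \<noteq> {}" "outcome (ballots r Y Z) \<subseteq> committees k"
    using outcome_nonempty[OF family] outcome_subset_committees[OF family] .
  show "insert c' (W - {c}) \<in> outcome (ballots r Y Z)"
    if "W \<in> outcome (ballots r Y Z)" "c \<in> Z" "c \<in> W" "c' \<notin> W" for W c c'
    using outcome_replace_unapproved[OF family that(1,3) _ that(4)] that(2)
    unfolding ballots_def by blast
qed simp

text \<open>Splitting ballots r Y Z by whether the ballots contain v: both parts have every committee
  of min_meet_committees k (insert v (Y \<union> Z)) in their outcome, so consistency applies and
  forces both parts to be indifferent.\<close>
lemma indifferent_split:
  assumes IH: "indifferent_at n"
    and disj: "Y \<inter> Z = {}" and card: "card Y + card Z = n" and "Z \<noteq> {}"
    and v: "v \<notin> Y" "v \<notin> Z"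
  shows "ballots r (insert v Y) Z \<noteq> {} \<Longrightarrow> outcome (ballots r (insert v Y) Z) = committees k"
    and "ballots r Y (insert v Z) \<noteq> {} \<Longrightarrow> outcome (ballots r Y (insert v Z)) = committees k"
proof -
  define X1 where "X1 = ballots r (insert v Y) Z"
  define X2 where "X2 = ballots r Y (insert v Z)"
  have split: "ballots r Y Z = X1 \<union> X2" "X1 \<inter> X2 = {}"
    unfolding X1_def X2_def ballots_def by auto
  have "insert v Y \<inter> Z = {}" "card (insert v Y) + card Z = Suc n"
    and "Y \<inter> insert v Z = {}" "card Y + card (insert v Z) = Suc n"
    using disj card v by (simp_all add: card_insert_disjoint)
  moreover have "insert v Y \<union> Z = insert v (Y \<union> Z)" "Y \<union> insert v Z = insert v (Y \<union> Z)" by auto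
  ultimately have min: "min_meet_committees k (insert v (Y \<union> Z)) \<subseteq> outcome X"
    if "X = X1 \<or> X = X2" "X \<noteq> {}" for X
    using that \<open>Z \<noteq> {}\<close> min_meet_committees_subset_outcome swap_closed_outcome_ballots[OF IH]
    unfolding X1_def X2_def by (metis insert_not_empty)
  have whole: "outcome (X1 \<union> X2) = committees k" if "X1 \<union> X2 \<noteq> {}"
    using indifferent_atD[OF IH disj card] that split by simp
  show "X1 \<noteq> {} \<Longrightarrow> outcome X1 = committees k" "X2 \<noteq> {} \<Longrightarrow> outcome X2 = committees k"
    unfolding atomize_imp atomize_conj
  proof (cases "X1 = {}"; cases "X2 = {}")
    assume "X1 \<noteq> {}" "X2 \<noteq> {}"
    then have family: "ballot_family X1" "ballot_family X2"
      unfolding X1_def X2_def by (simp_all add: ballot_family_ballots[OF r_pos])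
    have "min_meet_committees k (insert v (Y \<union> Z)) \<noteq> {}"
      using min_meet_committees_nonempty k_less_card less_imp_le by blast
    then have "outcome X1 \<inter> outcome X2 \<noteq> {}"
      using min[of X1] min[of X2] \<open>X1 \<noteq> {}\<close> \<open>X2 \<noteq> {}\<close> by blast
    then have "outcome X1 \<inter> outcome X2 = committees k"
      using outcome_Un[OF family split(2)] whole \<open>X1 \<noteq> {}\<close> by simp
    then show "(X1 \<noteq> {} \<longrightarrow> outcome X1 = committees k) \<and> (X2 \<noteq> {} \<longrightarrow> outcome X2 = committees k)"
      using outcome_subset_committees[OF family(1)] outcome_subset_committees[OF family(2)] by blast
  qed (use whole in auto)
qed

lemma indifferent_at_Suc_avoiding:
  assumes IH: "indifferent_at n" and "1 \<le> n"
    and disj: "Y \<inter> Z = {}" and card: "card Y + card Z = Suc n"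
    and "Z \<noteq> {}" "ballots r Y Z \<noteq> {}"
  shows "outcome (ballots r Y Z) = committees k"
proof (cases "Y = {}")
  case False
  then obtain y where y: "y \<in> Y" by blast
  then have "card (Y - {y}) + card Z = n" "insert y (Y - {y}) = Y"
    using card card_gt_0_iff[of Y] by (auto simp: card_Diff_singleton)
  then show ?thesis
    using indifferent_split(1)[OF IH _ _ \<open>Z \<noteq> {}\<close>, of "Y - {y}" y] disj assms(6) by auto
next
  case True
  obtain u where u: "u \<in> Z" using \<open>Z \<noteq> {}\<close> by blast
  then have "card {} + card (Z - {u}) = n" "insert u (Z - {u}) = Z"
    using card True by (auto simp: card_Diff_singleton)
  moreover have "Z - {u} \<noteq> {}" using calculation(1) \<open>1 \<le> n\<close> by (metis card.empty add_0 not_one_le_zero)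
  ultimately show ?thesis
    using indifferent_split(2)[OF IH _ _ \<open>Z - {u} \<noteq> {}\<close>, of "{}" u] True assms(6) by auto
qed

text \<open>A family ballots r Y {} is the part of ballots r (Y - {u}) {} left after removing the
  family ballots r (Y - {u}) {u}, which avoids a candidate.\<close>
lemma indifferent_at_Suc:
  assumes IH: "indifferent_at n" and "1 \<le> n"
  shows "indifferent_at (Suc n)"
  unfolding indifferent_at_def
proof (intro allI impI)
  fix Y Z :: "'a set"
  assume disj: "Y \<inter> Z = {}" and card: "card Y + card Z = Suc n" and ne: "ballots r Y Z \<noteq> {}"
  show "outcome (ballots r Y Z) = committees k"
  proof (cases "Z = {}")
    case False
    then show ?thesis using indifferent_at_Suc_avoiding[OF assms disj card _ ne] by blast
  next
    case True
    then obtain u where u: "u \<in> Y" using card \<open>1 \<le> n\<close> by fastforce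
    define X where "X = ballots r (Y - {u}) {u}"
    have split: "ballots r (Y - {u}) {} = ballots r Y {} \<union> X" "ballots r Y {} \<inter> X = {}"
      unfolding X_def ballots_def using u by auto
    have "card (Y - {u}) = n" using card True u by (simp add: card_Diff_singleton)
    then have "outcome (ballots r (Y - {u}) {}) = committees k"
      using indifferent_atD[OF IH, of "Y - {u}" "{}"] split ne True by simp
    moreover have "outcome (ballots r Y {} \<union> X) = outcome (ballots r Y {})" if "X \<noteq> {}"
    proof (rule outcome_Un_indifferent[OF _ _ split(2)])
      show "ballot_family (ballots r Y {})" "ballot_family X"
        using ballot_family_ballots[OF r_pos] ne that True unfolding X_def by simp_all
      show "outcome X = committees k"
        using indifferent_at_Suc_avoiding[OF assms, of "Y - {u}" "{u}"] that \<open>card (Y - {u}) = n\<close>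
        unfolding X_def by simp
    qed
    ultimately show ?thesis using True split(1) by (cases "X = {}") auto
  qed
qed

lemma indifferent_at_all:
  assumes "indifferent_at 1" shows "1 \<le> n \<Longrightarrow> indifferent_at n"
proof (induction n rule: nat_induct_at_least)
  case (Suc n)
  then show ?case using indifferent_at_Suc by simp
qed (use assms in simp)

lemma indifferent_at_1I:
  assumes "\<And>x. ballots r {x} {} \<noteq> {} \<Longrightarrow> outcome (ballots r {x} {}) = committees k"
    and "\<And>x. ballots r {} {x} \<noteq> {} \<Longrightarrow> outcome (ballots r {} {x}) = committees k"
  shows "indifferent_at 1"
  unfolding indifferent_at_def
proof (intro allI impI)
  fix Y Z :: "'a set" assume "Y \<inter> Z = {}" "card Y + card Z = 1" "ballots r Y Z \<noteq> {}"
  moreover have "(\<exists>x. Y = {x} \<and> Z = {}) \<or> (\<exists>x. Y = {} \<and> Z = {x})"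
    using \<open>card Y + card Z = 1\<close> by (auto simp: card_1_singleton_iff add_is_1)
  ultimately show "outcome (ballots r Y Z) = committees k" using assms by blast
qed

section \<open>Outcomes of the ballots containing or avoiding a candidate\<close>

lemma outcome_all_ballots:
  assumes ne: "ballots r {} ({} :: 'a set) \<noteq> {}"
  shows "outcome (ballots r {} {}) = committees k"
proof
  have family: "ballot_family (ballots r {} ({} :: 'a set))" using ballot_family_ballots[OF r_pos ne] .
  show "outcome (ballots r {} {}) \<subseteq> committees k" using outcome_subset_committees[OF family] .
  have closed: "swap_closed {} (outcome (ballots r {} {}))"
    unfolding swap_closed_def using outcome_ballots_transpose[OF ne] by simp
  obtain W0 where W0: "W0 \<in> outcome (ballots r {} {})" using outcome_nonempty[OF family] by blast
  then have "card W0 = k" using outcome_subset_committees[OF family] unfolding committees_def by auto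
  then show "committees k \<subseteq> outcome (ballots r {} {})"
    using swap_closed_orbit[OF closed W0] unfolding committees_def by auto
qed

lemma outcome_ballots_singleton_orbit:
  assumes ne: "ballots r Y Z \<noteq> {}" and YZ: "Y \<union> Z = {x}" and W: "W \<in> outcome (ballots r Y Z)"
    and "W' \<in> committees k" and "x \<in> W \<longleftrightarrow> x \<in> W'"
  shows "W' \<in> outcome (ballots r Y Z)"
proof -
  have "swap_closed {x} (outcome (ballots r Y Z))"
    unfolding swap_closed_def
  proof (intro allI impI)
    fix a b V assume "a \<in> {x} \<longleftrightarrow> b \<in> {x}" "V \<in> outcome (ballots r Y Z)"
    moreover have "a \<in> Y \<longleftrightarrow> b \<in> Y" "a \<in> Z \<longleftrightarrow> b \<in> Z"
      using YZ \<open>a \<in> {x} \<longleftrightarrow> b \<in> {x}\<close> by blast+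
    ultimately show "transpose a b ` V \<in> outcome (ballots r Y Z)"
      using outcome_ballots_transpose[OF ne] by blast
  qed
  moreover have "card W = k" "card W' = k"
    using W assms(4) outcome_subset_committees[OF ballot_family_ballots[OF r_pos ne]]
    unfolding committees_def by auto
  moreover have "card (W' \<inter> {x}) = card (W \<inter> {x})" using assms(5) by (cases "x \<in> W") auto
  ultimately show ?thesis using swap_closed_orbit[OF _ W] by simp
qed

text \<open>By neutrality the hypotheses hold for every candidate in place of x, which gives
  the base case of the induction over indifferent_at.\<close>
lemma indifferent_single_ballot:
  fixes x :: 'a
  assumes "r < card (UNIV :: 'a set)"
    and incl: "outcome (ballots r {x} {}) = committees k"
    and excl: "outcome (ballots r {} {x}) = committees k"
    and "card S = r"
  shows "outcome {S} = committees k"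
proof -
  have "indifferent_at 1"
  proof (rule indifferent_at_1I)
    fix y
    have "image (transpose x y) ` ballots r {x} {} = ballots r {y} {}"
      "image (transpose x y) ` ballots r {} {x} = ballots r {} {y}"
      by (simp_all add: image_ballots)
    then show "outcome (ballots r {y} {}) = committees k" "outcome (ballots r {} {y}) = committees k"
      using outcome_image[OF ballot_family_ballots[OF r_pos] bij_transpose]
        ballots_singleton_nonempty[OF r_pos assms(1)] incl excl image_committees[OF bij_transpose] by metis+
  qed
  moreover have "ballots r S (- S) = {S}" using \<open>card S = r\<close> unfolding ballots_def by auto
  moreover have "card S + card (- S) = card (UNIV :: 'a set)"
    using card_Un_disjoint[of S "- S"] by (simp add: Compl_partition)
  moreover have "1 \<le> card (UNIV :: 'a set)" by (simp add: Suc_le_eq card_gt_0_iff)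
  ultimately show ?thesis
    using indifferent_atD[OF indifferent_at_all, of "card (UNIV :: 'a set)" S "- S"] by simp
qed

lemma less_card_if_not_indifferent:
  assumes "card S = r" "outcome {S} \<noteq> committees k"
  shows "r < card (UNIV :: 'a set)"
proof (rule ccontr)
  assume "\<not> r < card (UNIV :: 'a set)"
  moreover have "card S \<le> card (UNIV :: 'a set)" by (rule card_mono) simp_all
  ultimately have "r = card (UNIV :: 'a set)" using assms(1) by simp
  then have "card T = r \<longleftrightarrow> T = UNIV" for T :: "'a set"
    using card_eq_UNIV_imp_eq_UNIV[of T] by auto
  then have "ballots r {} {} = {S}" unfolding ballots_def using assms(1) by auto
  then show False using outcome_all_ballots assms(2) by simp
qed

lemma outcome_incl_excl_disjoint:
  fixes x :: 'a
  assumes "card S = r" "outcome {S} \<noteq> committees k"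
  shows "outcome (ballots r {x} {}) \<inter> outcome (ballots r {} {x}) = {}"
proof (rule ccontr)
  assume meet: "outcome (ballots r {x} {}) \<inter> outcome (ballots r {} {x}) \<noteq> {}"
  have r_less: "r < card (UNIV :: 'a set)" using less_card_if_not_indifferent[OF assms] .
  have family: "ballot_family (ballots r {x} {})" "ballot_family (ballots r {} {x})"
    using ballot_family_ballots[OF r_pos] ballots_singleton_nonempty[OF r_pos r_less] by blast+
  have union: "ballots r {x} {} \<union> ballots r {} {x} = ballots r {} {}"
    and disj: "ballots r {x} {} \<inter> ballots r {} {x} = {}"
    unfolding ballots_def by auto
  moreover have "ballots r {} ({} :: 'a set) \<noteq> {}"
    using union ballots_singleton_nonempty[OF r_pos r_less] by blast
  ultimately have "outcome (ballots r {x} {}) \<inter> outcome (ballots r {} {x}) = committees k"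
    using outcome_Un[OF family disj meet] outcome_all_ballots by simp
  then have "outcome (ballots r {x} {}) = committees k" "outcome (ballots r {} {x}) = committees k"
    using outcome_subset_committees[OF family(1)] outcome_subset_committees[OF family(2)] by auto
  then show False using indifferent_single_ballot[OF r_less] assms by blast
qed

lemma outcome_excl_avoiding:
  fixes x :: 'a
  assumes "r < card (UNIV :: 'a set)"
  obtains W where "W \<in> outcome (ballots r {} {x})" "x \<notin> W"
proof -
  have family: "ballot_family (ballots r {} {x})"
    using ballot_family_ballots[OF r_pos] ballots_singleton_nonempty[OF r_pos assms] by blast
  obtain V where V: "V \<in> outcome (ballots r {} {x})" using outcome_nonempty[OF family] by blast
  show thesis
  proof (cases "x \<in> V")
    case True
    have "card V = k" using V outcome_subset_committees[OF family] unfolding committees_def by auto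
    then have "V \<noteq> UNIV" using k_less_card by auto
    then obtain c where "c \<notin> V" by blast
    then have "insert c (V - {x}) \<in> outcome (ballots r {} {x})"
      using outcome_replace_unapproved[OF family V True] unfolding ballots_def by blast
    then show thesis using that \<open>c \<notin> V\<close> True by blast
  qed (use that V in blast)
qed

lemma outcome_ballots_incl_excl:
  fixes x :: 'a
  assumes "card S = r" "outcome {S} \<noteq> committees k"
  shows "outcome (ballots r {x} {}) = {W \<in> committees k. x \<in> W}"
    and "outcome (ballots r {} {x}) = {W \<in> committees k. x \<notin> W}"
proof -
  define incl where "incl = outcome (ballots r {x} {})"
  define excl where "excl = outcome (ballots r {} {x})"
  have r_less: "r < card (UNIV :: 'a set)" using less_card_if_not_indifferent[OF assms] .
  have ne: "ballots r {x} {} \<noteq> {}" "ballots r {} {x} \<noteq> {}"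
    using ballots_singleton_nonempty[OF r_pos r_less] by blast+
  have sub: "incl \<subseteq> committees k" "excl \<subseteq> committees k" "incl \<noteq> {}"
    unfolding incl_def excl_def
    using outcome_subset_committees outcome_nonempty ballot_family_ballots[OF r_pos] ne by blast+
  have disj: "incl \<inter> excl = {}"
    unfolding incl_def excl_def using outcome_incl_excl_disjoint[OF assms] .
  obtain W where W: "W \<in> excl" "x \<notin> W"
    using outcome_excl_avoiding[OF r_less] unfolding excl_def by blast
  have excl_super: "W' \<in> excl" if "W' \<in> committees k" "x \<notin> W'" for W'
    using outcome_ballots_singleton_orbit[OF ne(2) _ W(1)[unfolded excl_def] that(1)] W(2) that(2)
    unfolding excl_def by simp
  have incl_sub: "x \<in> V" "V \<in> committees k" if "V \<in> incl" for V
    using excl_super[of V] disj sub(1) that by auto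
  obtain V where V: "V \<in> incl" using sub by blast
  have incl_super: "W' \<in> incl" if "W' \<in> committees k" "x \<in> W'" for W'
    using outcome_ballots_singleton_orbit[OF ne(1) _ V[unfolded incl_def] that(1)] incl_sub[OF V] that(2)
    unfolding incl_def by simp
  show "outcome (ballots r {x} {}) = {W \<in> committees k. x \<in> W}"
    using incl_sub incl_super unfolding incl_def by auto
  have "x \<notin> V" "V \<in> committees k" if "V \<in> excl" for V
    using incl_super[of V] disj sub(2) that by auto
  then show "outcome (ballots r {} {x}) = {W \<in> committees k. x \<notin> W}"
    using excl_super unfolding excl_def by auto
qed

end

theorem mainTheorem13:
  fixes f :: "('a::finite) profile \<Rightarrow> 'a set set" and k :: nat
  assumes "card (UNIV :: 'a set) \<ge> 2" and "1 \<le> k" and "k < card (UNIV :: 'a set)"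
    and "is_abc_rule k f"
    and "non_imposing k f" and "anonymous f" and "neutral f" and "consistent f"
    and "continuous_rule f" and "choice_set_convex k f" and "weakly_efficient f"
    and "1 \<le> r" and "r \<le> card (UNIV :: 'a set)"
    and "\<exists>S. is_ballot S \<and> card S = r \<and> f (single S) \<noteq> committees k"
  shows "(\<forall>A. is_profile A \<and> each_once (ballots_with x r) A
            \<longrightarrow> f A = {W \<in> committees k. x \<in> W})
       \<and> (\<forall>A. is_profile A \<and> each_once (ballots_without x r) A
            \<longrightarrow> f A = {W \<in> committees k. x \<notin> W})"
proof -
  interpret symmetric_consistent_rule_ballot_size f k r
    by unfold_locales (use assms in simp_all)
  obtain S where S: "S \<noteq> {}" "card S = r" "f (single S) \<noteq> committees k"
    using assms(14) unfolding is_ballot_def by blast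
  then have "outcome {S} \<noteq> committees k"
    using f_eq_outcome[OF is_profile_single each_once_single] by simp
  note outcomes = outcome_ballots_incl_excl[OF S(2) this, of x]
  show ?thesis
    unfolding ballots_with_eq[OF assms(12)] ballots_without_eq[OF assms(12)]
    using f_eq_outcome outcomes by metis
qed

end
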